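(* Let $\Gamma=\Gamma(G,X)$ be the cofinite Cayley graph. Then $\alpha\colon X\to G$ generates $G$ topologically (i.e. $\overline{\langle\alpha(X)\rangle}=G$) if and only if $\Gamma$ is cofinitely connected.
   Context: Let $G$ be a cofinite group and let $X=\{*\}\,\dot\cup\, E(X)$ be a cofinite graph with a single vertex $*$, together with a uniformly continuous map $\alpha\colon X\to G$ such that $\alpha( * )=1_G$ and $\alpha(\overline e)=(\alpha(e))^{-1}$ for all $e\in E(X)$. The cofinite Cayley graph $\Gamma(G,X)$ has vertex set $V=G\times\{*\}$ and edge set $E=G\times E(X)$, with $s(g,e)=(g,* )$, $t(g,e)=(g\alpha(e),* )$ and $\overline{(g,e)}=(g\alpha(e),\overline e)$; it carries the product uniform structure from $G\times X$, a fundamental system of compatible cofinite entourages being given by the sets $R\times S$ with $R$ a cofinite congruence on $G$ and $S$ a compatible cofinite entourage on $X$ satisfying $(\alpha\times\alpha)[S]\subseteq R$. A cofinite graph is cofinitely connected if for every compatible cofinite equivalence relation $R$ on it, the quotient graph by $R$ is path connected (any two vertices are joined by a finite string of edges $e_1\cdots e_n$ with $t(e_i)=s(e_{i+1})$). *)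

theory Defs
  imports "HOL-Algebra.Generated_Groups"
begin

text \<open>A graph is a carrier set X with a distinguished subset of vertices V,
  a source map s (a retraction of X onto V) and an involution bar on X fixing V
  pointwise.\<close>

record 'a graph =
  carr :: "'a set"
  verts :: "'a set"
  src :: "'a \<Rightarrow> 'a"
  rev :: "'a \<Rightarrow> 'a"

definition edges :: "'a graph \<Rightarrow> 'a set" where
  "edges \<Gamma> = carr \<Gamma> - verts \<Gamma>"

definition tgt :: "'a graph \<Rightarrow> 'a \<Rightarrow> 'a" where
  "tgt \<Gamma> x = src \<Gamma> (rev \<Gamma> x)"

definition is_graph :: "'a graph \<Rightarrow> bool" where
  "is_graph \<Gamma> \<longleftrightarrow>
     verts \<Gamma> \<subseteq> carr \<Gamma> \<and> verts \<Gamma> \<noteq> {} \<and>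
     (\<forall>x\<in>carr \<Gamma>. src \<Gamma> x \<in> verts \<Gamma>) \<and>
     (\<forall>v\<in>verts \<Gamma>. src \<Gamma> v = v) \<and>
     (\<forall>x\<in>carr \<Gamma>. rev \<Gamma> x \<in> carr \<Gamma> \<and> rev \<Gamma> (rev \<Gamma> x) = x) \<and>
     (\<forall>v\<in>verts \<Gamma>. rev \<Gamma> v = v)"

definition cofinite_equiv :: "'a set \<Rightarrow> ('a \<times> 'a) set \<Rightarrow> bool" where
  "cofinite_equiv A R \<longleftrightarrow> equiv A R \<and> finite (A // R)"

definition cofinite_uniformity ::
  "'a set \<Rightarrow> (('a \<times> 'a) set \<Rightarrow> bool) \<Rightarrow> ('a \<times> 'a) set set \<Rightarrow> bool" where
  "cofinite_uniformity A P \<U> \<longleftrightarrow>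
     \<U> \<noteq> {} \<and>
     (\<forall>U\<in>\<U>. Id_on A \<subseteq> U \<and> U \<subseteq> A \<times> A) \<and>
     (\<forall>U W. U \<in> \<U> \<longrightarrow> U \<subseteq> W \<longrightarrow> W \<subseteq> A \<times> A \<longrightarrow> W \<in> \<U>) \<and>
     (\<forall>U\<in>\<U>. \<forall>W\<in>\<U>. U \<inter> W \<in> \<U>) \<and>
     (\<forall>U\<in>\<U>. \<exists>R\<in>\<U>. R \<subseteq> U \<and> cofinite_equiv A R \<and> P R) \<and>
     \<Inter>\<U> = Id_on A"

definition congruence_rel :: "('g, 'b) monoid_scheme \<Rightarrow> ('g \<times> 'g) set \<Rightarrow> bool" where
  "congruence_rel G R \<longleftrightarrow>
     (\<forall>a b c d. (a, b) \<in> R \<longrightarrow> (c, d) \<in> R \<longrightarrow> (a \<otimes>\<^bsub>G\<^esub> c, b \<otimes>\<^bsub>G\<^esub> d) \<in> R)"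

definition cofinite_group :: "('g, 'b) monoid_scheme \<Rightarrow> ('g \<times> 'g) set set \<Rightarrow> bool" where
  "cofinite_group G \<U> \<longleftrightarrow> group G \<and> cofinite_uniformity (carrier G) (congruence_rel G) \<U>"

definition uniform_closure :: "'a set \<Rightarrow> ('a \<times> 'a) set set \<Rightarrow> 'a set \<Rightarrow> 'a set" where
  "uniform_closure A \<U> H = {x \<in> A. \<forall>U\<in>\<U>. U `` {x} \<inter> H \<noteq> {}}"

definition unif_continuous ::
  "'a set \<Rightarrow> ('a \<times> 'a) set set \<Rightarrow> ('b \<times> 'b) set set \<Rightarrow> ('a \<Rightarrow> 'b) \<Rightarrow> bool" where
  "unif_continuous A \<U> \<V> f \<longleftrightarrow> (\<forall>V\<in>\<V>. \<exists>U\<in>\<U>. map_prod f f ` U \<subseteq> V)"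

definition compatible_equiv :: "'a graph \<Rightarrow> ('a \<times> 'a) set \<Rightarrow> bool" where
  "compatible_equiv \<Gamma> R \<longleftrightarrow>
     equiv (carr \<Gamma>) R \<and>
     (\<forall>x y. (x, y) \<in> R \<longrightarrow> (x \<in> verts \<Gamma> \<longleftrightarrow> y \<in> verts \<Gamma>)) \<and>
     (\<forall>x y. (x, y) \<in> R \<longrightarrow> (src \<Gamma> x, src \<Gamma> y) \<in> R) \<and>
     (\<forall>x y. (x, y) \<in> R \<longrightarrow> (rev \<Gamma> x, rev \<Gamma> y) \<in> R)"

definition cofinite_graph :: "'a graph \<Rightarrow> ('a \<times> 'a) set set \<Rightarrow> bool" where
  "cofinite_graph \<Gamma> \<U> \<longleftrightarrow> is_graph \<Gamma> \<and> cofinite_uniformity (carr \<Gamma>) (compatible_equiv \<Gamma>) \<U>"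

text \<open>Path connectedness of the quotient graph X/R: any two vertex classes are joined by
  a finite string of edge classes [e_1] ... [e_n] with [t e_i] = [s e_(i+1)].\<close>
definition quot_walk :: "'a graph \<Rightarrow> ('a \<times> 'a) set \<Rightarrow> 'a \<Rightarrow> 'a \<Rightarrow> 'a list \<Rightarrow> bool" where
  "quot_walk \<Gamma> R v w es \<longleftrightarrow>
     set es \<subseteq> edges \<Gamma> \<and>
     (if es = [] then (v, w) \<in> R
      else (v, src \<Gamma> (hd es)) \<in> R \<and> (tgt \<Gamma> (last es), w) \<in> R \<and>
           (\<forall>i. Suc i < length es \<longrightarrow> (tgt \<Gamma> (es ! i), src \<Gamma> (es ! Suc i)) \<in> R))"

definition quotient_path_connected :: "'a graph \<Rightarrow> ('a \<times> 'a) set \<Rightarrow> bool" where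
  "quotient_path_connected \<Gamma> R \<longleftrightarrow>
     (\<forall>v\<in>verts \<Gamma>. \<forall>w\<in>verts \<Gamma>. \<exists>es. quot_walk \<Gamma> R v w es)"

definition cofinitely_connected :: "'a graph \<Rightarrow> ('a \<times> 'a) set set \<Rightarrow> bool" where
  "cofinitely_connected \<Gamma> \<U> \<longleftrightarrow>
     (\<forall>R\<in>\<U>. compatible_equiv \<Gamma> R \<and> finite (carr \<Gamma> // R) \<longrightarrow> quotient_path_connected \<Gamma> R)"

definition cayley_graph ::
  "('g, 'b) monoid_scheme \<Rightarrow> 'x graph \<Rightarrow> ('x \<Rightarrow> 'g) \<Rightarrow> ('g \<times> 'x) graph" where
  "cayley_graph G X \<alpha> =
     \<lparr> carr = carrier G \<times> carr X,
       verts = carrier G \<times> verts X,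
       src = (\<lambda>(g, x). (g, src X x)),
       rev = (\<lambda>(g, x). (g \<otimes>\<^bsub>G\<^esub> \<alpha> x, rev X x)) \<rparr>"

definition prod_rel :: "('g \<times> 'g) set \<Rightarrow> ('x \<times> 'x) set \<Rightarrow> (('g \<times> 'x) \<times> ('g \<times> 'x)) set" where
  "prod_rel R S = {((g, x), (h, y)). (g, h) \<in> R \<and> (x, y) \<in> S}"

definition product_uniformity ::
  "'g set \<Rightarrow> 'x set \<Rightarrow> ('g \<times> 'g) set set \<Rightarrow> ('x \<times> 'x) set set
     \<Rightarrow> (('g \<times> 'x) \<times> ('g \<times> 'x)) set set" where
  "product_uniformity A B \<U> \<V> =
     {W. W \<subseteq> (A \<times> B) \<times> (A \<times> B) \<and> (\<exists>R\<in>\<U>. \<exists>S\<in>\<V>. prod_rel R S \<subseteq> W)}"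

end

theory Submission
  imports Defs
begin

text \<open>An edge (g, e) of the Cayley graph joins g to g \<cdot> \<alpha>(e), so a walk from g reads off a word
  g \<cdot> \<alpha>(e1) \<cdots> \<alpha>(en), and since \<alpha>(rev e) = \<alpha>(e)\<inverse> these words exhaust \<langle>\<alpha>(X)\<rangle>.
  Every compatible cofinite entourage of the Cayley graph contains one of the form R \<times> S with
  R a cofinite congruence, so connectivity of the quotient only has to be checked up to R.
  If \<langle>\<alpha>(X)\<rangle> is dense, the R-class of g\<inverse>h contains a word, and its walk from g ends R-close
  to h. Conversely, choosing S with \<alpha>[S] \<subseteq> R makes R \<times> S compatible; along any walk in
  the quotient by R \<times> S the first coordinate stays R-congruent to an element of \<langle>\<alpha>(X)\<rangle>,
  so a walk from 1 to x shows that every R-class of x meets \<langle>\<alpha>(X)\<rangle>.\<close>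

lemma quot_walk_Nil [simp]: "quot_walk \<Gamma> R v w [] \<longleftrightarrow> (v, w) \<in> R"
  by (simp add: quot_walk_def)

lemma quot_walk_Cons [simp]:
  "quot_walk \<Gamma> R v w (e # es) \<longleftrightarrow>
     e \<in> edges \<Gamma> \<and> (v, src \<Gamma> e) \<in> R \<and> quot_walk \<Gamma> R (tgt \<Gamma> e) w es"
proof (cases es)
  case (Cons a as)
  have "(\<forall>i. Suc i < length (e # es) \<longrightarrow> (tgt \<Gamma> ((e # es) ! i), src \<Gamma> ((e # es) ! Suc i)) \<in> R)
    \<longleftrightarrow> (tgt \<Gamma> e, src \<Gamma> a) \<in> R \<and>
        (\<forall>i. Suc i < length es \<longrightarrow> (tgt \<Gamma> (es ! i), src \<Gamma> (es ! Suc i)) \<in> R)"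
    unfolding Cons by (auto simp: less_Suc_eq_0_disj)
  then show ?thesis using Cons by (auto simp: quot_walk_def)
qed (auto simp: quot_walk_def)

lemma quot_walk_invariant:
  assumes "quot_walk \<Gamma> R v w es" "Q v"
    and "\<And>a b. (a, b) \<in> R \<Longrightarrow> Q a \<Longrightarrow> Q b"
    and "\<And>e. e \<in> edges \<Gamma> \<Longrightarrow> Q (src \<Gamma> e) \<Longrightarrow> Q (tgt \<Gamma> e)"
  shows "Q w"
  using assms(1,2)
proof (induction es arbitrary: v)
  case (Cons e es)
  then show ?case using assms(3,4) by (meson quot_walk_Cons)
qed (use assms(3) in simp)

lemma edge_in_carr: "e \<in> edges \<Gamma> \<Longrightarrow> e \<in> carr \<Gamma>"
  by (auto simp: edges_def)

lemma rev_in_edges: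
  assumes "is_graph \<Gamma>" "e \<in> edges \<Gamma>"
  shows "rev \<Gamma> e \<in> edges \<Gamma>"
  using assms unfolding is_graph_def edges_def by (metis Diff_iff)

lemma equiv_prod_rel:
  assumes "equiv A R" "equiv B S"
  shows "equiv (A \<times> B) (prod_rel R S)"
proof (rule equivI)
  from assms(1) obtain "R \<subseteq> A \<times> A" "refl_on A R" "sym R" "trans R" by (rule equivE)
  moreover from assms(2) obtain "S \<subseteq> B \<times> B" "refl_on B S" "sym S" "trans S" by (rule equivE)
  ultimately show "prod_rel R S \<subseteq> (A \<times> B) \<times> A \<times> B" "refl_on (A \<times> B) (prod_rel R S)"
      "sym (prod_rel R S)" "trans (prod_rel R S)"
    unfolding prod_rel_def by (auto simp: refl_on_def intro!: symI transI dest: symD transD)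
qed

lemma finite_quotient_prod_rel:
  assumes "finite (A // R)" "finite (B // S)"
  shows "finite ((A \<times> B) // prod_rel R S)"
proof (rule finite_subset)
  show "(A \<times> B) // prod_rel R S \<subseteq> (\<lambda>(P, Q). P \<times> Q) ` (A // R \<times> B // S)"
  proof
    fix Z assume "Z \<in> (A \<times> B) // prod_rel R S"
    then obtain a b where ab: "a \<in> A" "b \<in> B" "Z = prod_rel R S `` {(a, b)}"
      by (auto elim!: quotientE)
    then have "Z = R `` {a} \<times> S `` {b}" by (auto simp: prod_rel_def)
    with ab show "Z \<in> (\<lambda>(P, Q). P \<times> Q) ` (A // R \<times> B // S)"
      by (auto intro!: image_eqI[where x="(R `` {a}, S `` {b})"] quotientI)
  qed
qed (use assms in auto)

lemma cofinite_uniformity_refl: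
  assumes "cofinite_uniformity A P \<U>" "U \<in> \<U>" "x \<in> A"
  shows "(x, x) \<in> U"
proof -
  have "Id_on A \<subseteq> U" using assms(1,2) unfolding cofinite_uniformity_def by simp
  then show ?thesis using assms(3) by auto
qed

lemma cofinite_uniformity_basis:
  assumes "cofinite_uniformity A P \<U>" "U \<in> \<U>"
  obtains R where "R \<in> \<U>" "R \<subseteq> U" "equiv A R" "finite (A // R)" "P R"
proof -
  have "\<exists>R\<in>\<U>. R \<subseteq> U \<and> cofinite_equiv A R \<and> P R"
    using assms unfolding cofinite_uniformity_def by simp
  then show ?thesis using that unfolding cofinite_equiv_def by blast
qed

lemma congruence_rel_mult:
  assumes "congruence_rel G R" "(a, b) \<in> R" "(c, d) \<in> R"
  shows "(a \<otimes>\<^bsub>G\<^esub> c, b \<otimes>\<^bsub>G\<^esub> d) \<in> R"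
  using assms unfolding congruence_rel_def by blast

locale cayley_data = group G for G :: "('g, 'b) monoid_scheme" (structure) +
  fixes X :: "'x graph" and star :: 'x and \<alpha> :: "'x \<Rightarrow> 'g"
  assumes graph_X: "is_graph X"
    and verts_X: "verts X = {star}"
    and \<alpha>_closed: "\<alpha> \<in> carr X \<rightarrow> carrier G"
    and \<alpha>_star: "\<alpha> star = \<one>"
    and \<alpha>_rev: "\<forall>e\<in>edges X. \<alpha> (rev X e) = inv (\<alpha> e)"
begin

abbreviation \<Gamma> :: "('g \<times> 'x) graph" where "\<Gamma> \<equiv> cayley_graph G X \<alpha>"

lemma \<alpha>_in_carrier [simp]: "x \<in> carr X \<Longrightarrow> \<alpha> x \<in> carrier G"
  using \<alpha>_closed by auto

lemma carr_X: "carr X = insert star (edges X)"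
  using graph_X verts_X by (auto simp: is_graph_def edges_def)

lemma star_in_carr: "star \<in> carr X"
  by (simp add: carr_X)

lemma src_X: "x \<in> carr X \<Longrightarrow> src X x = star"
  using graph_X verts_X by (auto simp: is_graph_def)

lemma carr_\<Gamma>: "carr \<Gamma> = carrier G \<times> carr X"
  by (simp add: cayley_graph_def)

lemma verts_\<Gamma>: "verts \<Gamma> = carrier G \<times> {star}"
  by (simp add: cayley_graph_def verts_X)

lemma edges_\<Gamma>: "edges \<Gamma> = carrier G \<times> edges X"
  by (auto simp: edges_def cayley_graph_def)

lemma src_\<Gamma>: "x \<in> carr X \<Longrightarrow> src \<Gamma> (g, x) = (g, star)"
  by (simp add: cayley_graph_def src_X)

lemma tgt_\<Gamma>: "x \<in> carr X \<Longrightarrow> tgt \<Gamma> (g, x) = (g \<otimes> \<alpha> x, star)"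
  using graph_X by (simp add: tgt_def cayley_graph_def src_X is_graph_def)

primrec word :: "'x list \<Rightarrow> 'g" where
  "word [] = \<one>"
| "word (e # es) = \<alpha> e \<otimes> word es"

lemma word_closed: "set es \<subseteq> carr X \<Longrightarrow> word es \<in> carrier G"
  by (induction es) auto

lemma word_append:
  "set es \<subseteq> carr X \<Longrightarrow> set fs \<subseteq> carr X \<Longrightarrow> word (es @ fs) = word es \<otimes> word fs"
  by (induction es) (auto simp: word_closed m_assoc)

lemma generate_imp_word:
  assumes "h \<in> generate G (\<alpha> ` carr X)"
  shows "\<exists>es. set es \<subseteq> edges X \<and> h = word es"
  using assms
proof (induction rule: generate.induct)
  case one
  show ?case by (intro exI[of _ "[]"]) simp
next
  case (incl h)
  then obtain x where "x \<in> carr X" "h = \<alpha> x" by auto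
  then consider "h = \<one>" | "x \<in> edges X" "h = \<alpha> x"
    using carr_X \<alpha>_star by auto
  then show ?case
  proof cases
    case 2 then show ?thesis
      by (intro exI[of _ "[x]"]) (simp add: edge_in_carr)
  qed (intro exI[of _ "[]"], simp)
next
  case (inv h)
  then obtain x where "x \<in> carr X" "h = \<alpha> x" by auto
  then consider "h = \<one>" | "x \<in> edges X" "h = \<alpha> x"
    using carr_X \<alpha>_star by auto
  then show ?case
  proof cases
    case 1 then show ?thesis by (intro exI[of _ "[]"]) simp
  next
    case 2
    then have "rev X x \<in> edges X" "inv h = \<alpha> (rev X x)"
      using rev_in_edges[OF graph_X] \<alpha>_rev by auto
    then show ?thesis
      by (intro exI[of _ "[rev X x]"]) (simp add: edge_in_carr)
  qed
next
  case (eng h1 h2)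
  then obtain es fs where "set es \<subseteq> edges X" "h1 = word es" "set fs \<subseteq> edges X" "h2 = word fs"
    by blast
  moreover have "set es \<subseteq> carr X" "set fs \<subseteq> carr X"
    using calculation by (auto simp: edges_def)
  ultimately show ?case
    by (intro exI[of _ "es @ fs"]) (simp add: word_append)
qed

primrec cayley_path :: "'g \<Rightarrow> 'x list \<Rightarrow> ('g \<times> 'x) list" where
  "cayley_path g [] = []"
| "cayley_path g (e # es) = (g, e) # cayley_path (g \<otimes> \<alpha> e) es"

lemma quot_walk_cayley_path:
  assumes "equiv (carr \<Gamma>) W" "g \<in> carrier G" "set es \<subseteq> edges X"
    and "((g \<otimes> word es, star), w) \<in> W"
  shows "quot_walk \<Gamma> W (g, star) w (cayley_path g es)"
  using assms(2-4)
proof (induction es arbitrary: g)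
  case Nil
  then show ?case by simp
next
  case (Cons e es)
  then have e: "e \<in> edges X" "e \<in> carr X" and "set es \<subseteq> carr X"
    by (auto simp: edges_def)
  then have closed: "\<alpha> e \<in> carrier G" "word es \<in> carrier G"
    by (auto simp: word_closed)
  have "((g, star), (g, star)) \<in> W"
    using assms(1) Cons.prems(1) carr_X carr_\<Gamma> by (auto elim!: equivE dest: refl_onD)
  moreover have "quot_walk \<Gamma> W (g \<otimes> \<alpha> e, star) w (cayley_path (g \<otimes> \<alpha> e) es)"
    using Cons closed by (intro Cons.IH) (auto simp: m_assoc)
  ultimately show ?case
    using e Cons.prems(1) by (simp add: edges_\<Gamma> src_\<Gamma> tgt_\<Gamma>)
qed

lemma compatible_equiv_prod_rel:
  assumes "equiv (carrier G) R" "congruence_rel G R" "compatible_equiv X S"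
    and "\<And>a b. (a, b) \<in> S \<Longrightarrow> (\<alpha> a, \<alpha> b) \<in> R"
  shows "compatible_equiv \<Gamma> (prod_rel R S)"
  unfolding compatible_equiv_def
proof (intro conjI allI impI)
  show "equiv (carr \<Gamma>) (prod_rel R S)"
    using assms(1,3) by (simp add: carr_\<Gamma> compatible_equiv_def equiv_prod_rel)
next
  fix p q assume "(p, q) \<in> prod_rel R S"
  then obtain g a h b where pq: "p = (g, a)" "q = (h, b)" "(g, h) \<in> R" "(a, b) \<in> S"
    unfolding prod_rel_def by auto
  moreover have "g \<in> carrier G" "h \<in> carrier G"
    using pq(3) assms(1) by (auto elim: equivE)
  ultimately show "(p \<in> verts \<Gamma>) = (q \<in> verts \<Gamma>)" "(src \<Gamma> p, src \<Gamma> q) \<in> prod_rel R S"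
      "(rev \<Gamma> p, rev \<Gamma> q) \<in> prod_rel R S"
    using assms(3) congruence_rel_mult[OF assms(2) pq(3) assms(4)[OF pq(4)]]
    by (auto simp: compatible_equiv_def cayley_graph_def prod_rel_def)
qed

lemma quot_walk_imp_close_to_generate:
  assumes "equiv (carrier G) R" "congruence_rel G R"
    and "quot_walk \<Gamma> (prod_rel R S) (\<one>, star) (x, star) es"
  shows "\<exists>h\<in>generate G (\<alpha> ` carr X). (x, h) \<in> R"
proof -
  let ?H = "generate G (\<alpha> ` carr X)"
  have "\<exists>h\<in>?H. (fst (x, star), h) \<in> R"
  proof (rule quot_walk_invariant[OF assms(3), where Q = "\<lambda>p. \<exists>h\<in>?H. (fst p, h) \<in> R"])
    show "\<exists>h\<in>?H. (fst (\<one>, star), h) \<in> R"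
      using assms(1) generate.one by (fastforce elim: equivE dest: refl_onD)
  next
    fix p q assume pq: "(p, q) \<in> prod_rel R S" and "\<exists>h\<in>?H. (fst p, h) \<in> R"
    then obtain h where "h \<in> ?H" "(fst p, h) \<in> R" by blast
    moreover have "(fst p, fst q) \<in> R" using pq unfolding prod_rel_def by auto
    ultimately show "\<exists>h\<in>?H. (fst q, h) \<in> R"
      using assms(1) by (meson equivE symD transD)
  next
    fix e assume e: "e \<in> edges \<Gamma>" "\<exists>h\<in>?H. (fst (src \<Gamma> e), h) \<in> R"
    then obtain k y h where "e = (k, y)" "y \<in> carr X" "h \<in> ?H" "(k, h) \<in> R"
      by (auto simp: edges_\<Gamma> edge_in_carr src_\<Gamma>)
    moreover have "(\<alpha> y, \<alpha> y) \<in> R"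
      using \<open>y \<in> carr X\<close> assms(1) by (meson \<alpha>_in_carrier equivE refl_onD)
    moreover have "h \<otimes> \<alpha> y \<in> ?H"
      using \<open>h \<in> ?H\<close> \<open>y \<in> carr X\<close> by (blast intro: generate.eng generate.incl)
    ultimately show "\<exists>h\<in>?H. (fst (tgt \<Gamma> e), h) \<in> R"
      using congruence_rel_mult[OF assms(2)] by (fastforce simp: tgt_\<Gamma>)
  qed
  then show ?thesis by simp
qed

lemma cofinitely_connected_if_dense:
  assumes \<U>G: "cofinite_uniformity (carrier G) (congruence_rel G) \<U>G"
    and \<U>X: "cofinite_uniformity (carr X) P \<U>X"
    and dense: "uniform_closure (carrier G) \<U>G (generate G (\<alpha> ` carr X)) = carrier G"
  shows "cofinitely_connected \<Gamma> (product_uniformity (carrier G) (carr X) \<U>G \<U>X)"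
  unfolding cofinitely_connected_def quotient_path_connected_def
proof (intro ballI impI)
  fix W v w
  assume "W \<in> product_uniformity (carrier G) (carr X) \<U>G \<U>X"
    and W: "compatible_equiv \<Gamma> W \<and> finite (carr \<Gamma> // W)"
    and "v \<in> verts \<Gamma>" "w \<in> verts \<Gamma>"
  then obtain R S g h where "R \<in> \<U>G" "S \<in> \<U>X" "prod_rel R S \<subseteq> W"
    and g: "g \<in> carrier G" "v = (g, star)" and h: "h \<in> carrier G" "w = (h, star)"
    unfolding product_uniformity_def by (auto simp: verts_\<Gamma>)
  obtain R0 where R0: "R0 \<in> \<U>G" "R0 \<subseteq> R" "equiv (carrier G) R0" "congruence_rel G R0"
    by (rule cofinite_uniformity_basis[OF \<U>G \<open>R \<in> \<U>G\<close>])
  have "inv g \<otimes> h \<in> uniform_closure (carrier G) \<U>G (generate G (\<alpha> ` carr X))"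
    using dense g h by simp
  then obtain u where "u \<in> generate G (\<alpha> ` carr X)" "(inv g \<otimes> h, u) \<in> R0"
    using R0(1) unfolding uniform_closure_def by blast
  moreover obtain es where es: "set es \<subseteq> edges X" "u = word es"
    using generate_imp_word calculation(1) by blast
  moreover have "(g, g) \<in> R0"
    using R0(3) g(1) by (meson equivE refl_onD)
  ultimately have "(g \<otimes> (inv g \<otimes> h), g \<otimes> word es) \<in> R0"
    using congruence_rel_mult[OF R0(4)] by blast
  then have "(g \<otimes> word es, h) \<in> R0"
    using R0(3) g h by (simp add: m_assoc[symmetric]) (meson equivE symD)
  moreover have "(star, star) \<in> S"
    using cofinite_uniformity_refl[OF \<U>X \<open>S \<in> \<U>X\<close> star_in_carr] .
  ultimately have "((g \<otimes> word es, star), w) \<in> W"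
    using R0(2) h(2) \<open>prod_rel R S \<subseteq> W\<close> unfolding prod_rel_def by blast
  then have "quot_walk \<Gamma> W v w (cayley_path g es)"
    using quot_walk_cayley_path W g es(1) by (simp add: compatible_equiv_def)
  then show "\<exists>es. quot_walk \<Gamma> W v w es" ..
qed

lemma dense_if_cofinitely_connected:
  assumes \<U>G: "cofinite_uniformity (carrier G) (congruence_rel G) \<U>G"
    and \<U>X: "cofinite_uniformity (carr X) (compatible_equiv X) \<U>X"
    and cont: "unif_continuous (carr X) \<U>X \<U>G \<alpha>"
    and conn: "cofinitely_connected \<Gamma> (product_uniformity (carrier G) (carr X) \<U>G \<U>X)"
  shows "uniform_closure (carrier G) \<U>G (generate G (\<alpha> ` carr X)) = carrier G"
proof -
  have "U `` {x} \<inter> generate G (\<alpha> ` carr X) \<noteq> {}" if x: "x \<in> carrier G" and "U \<in> \<U>G" for x U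
  proof -
    obtain R where R: "R \<in> \<U>G" "R \<subseteq> U" "equiv (carrier G) R" "finite (carrier G // R)"
        "congruence_rel G R"
      by (rule cofinite_uniformity_basis[OF \<U>G \<open>U \<in> \<U>G\<close>])
    obtain V where "V \<in> \<U>X" "map_prod \<alpha> \<alpha> ` V \<subseteq> R"
      using cont R(1) unfolding unif_continuous_def by blast
    obtain S where S: "S \<in> \<U>X" "S \<subseteq> V" "equiv (carr X) S" "finite (carr X // S)"
        "compatible_equiv X S"
      by (rule cofinite_uniformity_basis[OF \<U>X \<open>V \<in> \<U>X\<close>])
    have "compatible_equiv \<Gamma> (prod_rel R S)"
      using \<open>map_prod \<alpha> \<alpha> ` V \<subseteq> R\<close> S(2)
      by (intro compatible_equiv_prod_rel R(3,5) S(5)) force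
    moreover have "finite (carr \<Gamma> // prod_rel R S)"
      using finite_quotient_prod_rel[OF R(4) S(4)] by (simp add: carr_\<Gamma>)
    moreover have "prod_rel R S \<in> product_uniformity (carrier G) (carr X) \<U>G \<U>X"
      using equiv_prod_rel[OF R(3) S(3)] R(1) S(1)
      unfolding product_uniformity_def by (blast elim: equivE)
    ultimately have "quotient_path_connected \<Gamma> (prod_rel R S)"
      using conn unfolding cofinitely_connected_def by blast
    then obtain es where "quot_walk \<Gamma> (prod_rel R S) (\<one>, star) (x, star) es"
      using x unfolding quotient_path_connected_def by (auto simp: verts_\<Gamma>)
    then obtain h where "h \<in> generate G (\<alpha> ` carr X)" "(x, h) \<in> R"
      using quot_walk_imp_close_to_generate[OF R(3,5)] by blast
    then show ?thesis using R(2) by blast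
  qed
  then show ?thesis by (auto simp: uniform_closure_def)
qed

end

theorem mainTheorem8:
  fixes G :: "('g, 'b) monoid_scheme" and \<U>G :: "('g \<times> 'g) set set"
    and X :: "'x graph" and \<U>X :: "('x \<times> 'x) set set"
    and star :: 'x and \<alpha> :: "'x \<Rightarrow> 'g"
  assumes "cofinite_group G \<U>G"
    and "cofinite_graph X \<U>X"
    and "verts X = {star}"
    and "\<alpha> \<in> carr X \<rightarrow> carrier G"
    and "unif_continuous (carr X) \<U>X \<U>G \<alpha>"
    and "\<alpha> star = \<one>\<^bsub>G\<^esub>"
    and "\<forall>e\<in>edges X. \<alpha> (rev X e) = inv\<^bsub>G\<^esub> (\<alpha> e)"
  shows "uniform_closure (carrier G) \<U>G (generate G (\<alpha> ` carr X)) = carrier G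
     \<longleftrightarrow> cofinitely_connected (cayley_graph G X \<alpha>)
           (product_uniformity (carrier G) (carr X) \<U>G \<U>X)"
proof -
  from assms(1) have "group G" and \<U>G: "cofinite_uniformity (carrier G) (congruence_rel G) \<U>G"
    by (auto simp: cofinite_group_def)
  from assms(2) have "is_graph X" and \<U>X: "cofinite_uniformity (carr X) (compatible_equiv X) \<U>X"
    by (auto simp: cofinite_graph_def)
  interpret cayley_data G X star \<alpha>
    using \<open>group G\<close> \<open>is_graph X\<close> assms(3,4,6,7)
    by (simp add: cayley_data_def cayley_data_axioms_def)
  show ?thesis
    using cofinitely_connected_if_dense[OF \<U>G \<U>X] dense_if_cofinitely_connected[OF \<U>G \<U>X assms(5)]
    by blast
qed

end
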